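(* For real $\alpha\ne0$ and real $\beta$, let $F_{\alpha,\beta}(x)=\bigl(1+\frac{\alpha}{x}\bigr)^{x+\beta}$. Then: (1) For $\alpha>0$: $\bigl(1+\frac{\alpha}{x}\bigr)^{x+\beta}-e^{\alpha}\in\mathcal{C}[(0,\infty)]$ if and only if $\alpha\le2\beta$; and $\bigl(1+\frac{\alpha}{x}\bigr)^{-(x+\beta)}-e^{-\alpha}\in\mathcal{C}[(0,\infty)]$ if and only if $\beta\le0$. (2) For $\alpha<0$: $\bigl(1+\frac{\alpha}{x}\bigr)^{x+\beta}-e^{\alpha}\in\mathcal{C}[(-\alpha,\infty)]$ if and only if $\beta\le\alpha$; and $\frac{1}{F_{\alpha,\beta}(x)}\in\mathcal{C}[(-\alpha,\infty)]$ if and only if $2\beta\ge\alpha$.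
   Context: A function $f$ is completely monotonic on an interval $I$ if it has derivatives of all orders on $I$ and $(-1)^k f^{(k)}(x)\ge0$ for all $x\in I$ and all integers $k\ge0$; the set of such functions is denoted $\mathcal{C}[I]$. *)

theory Defs
  imports Complex_Main
begin

definition completely_monotonic_on :: "(real \<Rightarrow> real) \<Rightarrow> real set \<Rightarrow> bool" where
  "completely_monotonic_on f I \<longleftrightarrow>
     (\<exists>D :: nat \<Rightarrow> real \<Rightarrow> real.
        (\<forall>x\<in>I. D 0 x = f x) \<and>
        (\<forall>k. \<forall>x\<in>I. (D k has_real_derivative D (Suc k) x) (at x)) \<and>
        (\<forall>k. \<forall>x\<in>I. (-1) ^ k * D k x \<ge> 0))"

definition F_ab :: "real \<Rightarrow> real \<Rightarrow> real \<Rightarrow> real" where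
  "F_ab \<alpha> \<beta> x = (1 + \<alpha> / x) powr (x + \<beta>)"

end

theory Submission
  imports Defs "HOL-Real_Asymp.Real_Asymp"
begin

text \<open>Write \<open>F = exp \<phi>\<close> with \<open>\<phi> x = (x + \<beta>) * (ln (x + \<alpha>) - ln x)\<close>. If \<open>-\<phi>'\<close> is
  completely monotonic, so is \<open>exp \<phi>\<close>: each derivative of \<open>exp \<phi>\<close> is a sum of products of
  derivatives of \<open>\<phi>'\<close> and lower derivatives of \<open>exp \<phi>\<close>, with the right signs; likewise for
  \<open>exp (-\<phi>)\<close>. Up to a positive factor, \<open>(-1)^n \<phi>\<^sup>(\<^sup>n\<^sup>+\<^sup>2\<^sup>) x\<close> equals
  \<open>m (\<beta> (Q - P) + \<alpha> P) - \<alpha> S\<close>, where \<open>m = n + 1\<close>, \<open>P = x^(m+1)\<close>, \<open>Q = (x + \<alpha>)^(m+1)\<close>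
  and \<open>S = \<Sum>i<m. x^(m-i) (x + \<alpha>)^(i+1)\<close>; its sign in each parameter region follows from
  \<open>m min P Q \<le> S \<le> m (P + Q) / 2\<close>. The signs of \<open>\<phi>'\<close> and \<open>\<phi> - \<alpha>\<close> follow by monotonicity,
  as both tend to \<open>0\<close> at infinity.
  Conversely, complete monotonicity forces \<open>\<alpha> \<le> \<phi>\<close> or \<open>\<phi> \<le> \<alpha>\<close> on the whole interval. This
  is refuted either by \<open>x (\<phi> x - \<alpha>) \<longrightarrow> \<alpha> (2\<beta> - \<alpha>) / 2\<close> at infinity, or by the divergence of
  \<open>\<phi>\<close> at the left end point of the interval.\<close>

section \<open>Complete monotonicity\<close>

lemma completely_monotonic_on_cong:
  assumes "\<And>x. x \<in> I \<Longrightarrow> f x = g x"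
  shows "completely_monotonic_on f I \<longleftrightarrow> completely_monotonic_on g I"
  unfolding completely_monotonic_on_def using assms by auto

lemma completely_monotonic_on_nonneg:
  "completely_monotonic_on f I \<Longrightarrow> x \<in> I \<Longrightarrow> 0 \<le> f x"
  unfolding completely_monotonic_on_def by (metis power_0 mult_1)

lemma completely_monotonic_on_diff_const:
  assumes cm: "completely_monotonic_on f I" and ge: "\<And>x. x \<in> I \<Longrightarrow> c \<le> f x"
  shows "completely_monotonic_on (\<lambda>x. f x - c) I"
proof -
  obtain D where D0: "\<forall>x\<in>I. D 0 x = f x"
    and D: "\<forall>k. \<forall>x\<in>I. (D k has_real_derivative D (Suc k) x) (at x)"
    and sgn: "\<forall>k. \<forall>x\<in>I. 0 \<le> (-1) ^ k * D k x"
    using cm unfolding completely_monotonic_on_def by blast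
  define D' where "D' k x = (if k = 0 then D 0 x - c else D k x)" for k x
  have "(D' k has_real_derivative D' (Suc k) x) (at x)" if "x \<in> I" for k x
  proof (cases k)
    case 0
    have "((\<lambda>x. D 0 x - c) has_real_derivative D (Suc 0) x - 0) (at x)"
      using D that by (intro DERIV_diff DERIV_const) auto
    moreover have "D' 0 = (\<lambda>x. D 0 x - c)" by (simp add: D'_def fun_eq_iff)
    ultimately show ?thesis using 0 by (simp add: D'_def)
  next
    case (Suc m)
    then have "D' k = D k" by (simp add: D'_def fun_eq_iff)
    then show ?thesis using D that by (simp add: D'_def)
  qed
  moreover have "0 \<le> (-1) ^ k * D' k x" if "x \<in> I" for k x
    using sgn ge D0 that by (auto simp: D'_def)
  ultimately show ?thesis
    unfolding completely_monotonic_on_def using D0 by (intro exI[of _ D']) (auto simp: D'_def)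
qed

lemma DERIV_nonneg_imp_le_tendsto_at_top:
  fixes g g' :: "real \<Rightarrow> real"
  assumes deriv: "\<And>y. c < y \<Longrightarrow> (g has_real_derivative g' y) (at y)"
      and nonneg: "\<And>y. c < y \<Longrightarrow> 0 \<le> g' y"
      and lim: "(g \<longlongrightarrow> L) at_top" and x: "c < x"
  shows "g x \<le> L"
proof -
  have "\<forall>\<^sub>F y in at_top. g x \<le> g y"
    using eventually_ge_at_top[of x]
  proof eventually_elim
    case (elim y)
    show ?case
      by (rule deriv_nonneg_imp_mono[of x y g g']) (use deriv nonneg x elim in auto)
  qed
  then show ?thesis by (rule tendsto_lowerbound[OF lim]) simp
qed

lemma DERIV_nonpos_imp_ge_tendsto_at_top:
  fixes g g' :: "real \<Rightarrow> real"
  assumes deriv: "\<And>y. c < y \<Longrightarrow> (g has_real_derivative g' y) (at y)"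
      and nonpos: "\<And>y. c < y \<Longrightarrow> g' y \<le> 0"
      and lim: "(g \<longlongrightarrow> L) at_top" and x: "c < x"
  shows "L \<le> g x"
proof -
  have "\<forall>\<^sub>F y in at_top. g y \<le> g x"
    using eventually_ge_at_top[of x]
  proof eventually_elim
    case (elim y)
    show ?case
      by (rule deriv_nonpos_imp_antimono[of x y g g']) (use deriv nonpos x elim in auto)
  qed
  then show ?thesis by (rule tendsto_upperbound[OF lim]) simp
qed

lemma completely_monotonic_on_ge_tendsto:
  assumes cm: "completely_monotonic_on f {c<..}" and lim: "(f \<longlongrightarrow> L) at_top" and x: "c < x"
  shows "L \<le> f x"
proof -
  obtain D where D0: "\<forall>x\<in>{c<..}. D 0 x = f x"
    and D: "\<forall>k. \<forall>x\<in>{c<..}. (D k has_real_derivative D (Suc k) x) (at x)"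
    and sgn: "\<forall>k. \<forall>x\<in>{c<..}. 0 \<le> (-1) ^ k * D k x"
    using cm unfolding completely_monotonic_on_def by blast
  have "\<forall>\<^sub>F y in at_top. f y = D 0 y"
    using eventually_gt_at_top[of c] by eventually_elim (use D0 in simp)
  with lim have limD: "(D 0 \<longlongrightarrow> L) at_top" by (rule Lim_transform_eventually)
  have "L \<le> D 0 x"
  proof (rule DERIV_nonpos_imp_ge_tendsto_at_top[OF _ _ limD x])
    fix y assume "c < y"
    then show "(D 0 has_real_derivative D (Suc 0) y) (at y)" using D by simp
    have "0 \<le> (-1) ^ 1 * D 1 y" using sgn \<open>c < y\<close> by blast
    then show "D (Suc 0) y \<le> 0" by simp
  qed
  then show ?thesis using D0 x by simp
qed

definition leibniz_deriv ::
    "(nat \<Rightarrow> real \<Rightarrow> real) \<Rightarrow> (nat \<Rightarrow> real \<Rightarrow> real) \<Rightarrow> nat \<Rightarrow> real \<Rightarrow> real" where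
  "leibniz_deriv A B n x = (\<Sum>j\<le>n. real (n choose j) * A j x * B (n - j) x)"

lemma leibniz_deriv_Suc:
  "leibniz_deriv A B (Suc n) x =
     (\<Sum>j\<le>n. real (n choose j) * (A (Suc j) x * B (n - j) x + A j x * B (Suc (n - j)) x))"
proof -
  let ?L = "\<Sum>k\<le>n. real (n choose k) * A (Suc k) x * B (n - k) x"
  let ?R = "\<Sum>k<n. real (n choose Suc k) * A (Suc k) x * B (Suc (n - Suc k)) x"
  have "leibniz_deriv A B (Suc n) x =
      A 0 x * B (Suc n) x + (\<Sum>k\<le>n. real (Suc n choose Suc k) * A (Suc k) x * B (n - k) x)"
    unfolding leibniz_deriv_def sum.atMost_Suc_shift by simp
  also have "(\<Sum>k\<le>n. real (Suc n choose Suc k) * A (Suc k) x * B (n - k) x) =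
      ?L + (\<Sum>k\<le>n. real (n choose Suc k) * A (Suc k) x * B (n - k) x)"
    by (simp add: sum.distrib algebra_simps)
  also have "(\<Sum>k\<le>n. real (n choose Suc k) * A (Suc k) x * B (n - k) x) = ?R"
    by (simp add: lessThan_Suc_atMost[symmetric] Suc_diff_Suc)
  also have "A 0 x * B (Suc n) x + (?L + ?R) =
      ?L + (\<Sum>j\<le>n. real (n choose j) * A j x * B (Suc (n - j)) x)"
    by (simp add: sum.atMost_shift)
  also have "\<dots> = (\<Sum>j\<le>n. real (n choose j) * (A (Suc j) x * B (n - j) x + A j x * B (Suc (n - j)) x))"
    by (simp add: sum.distrib distrib_left mult.assoc)
  finally show ?thesis .
qed

lemma DERIV_leibniz_deriv:
  assumes "\<And>j. j \<le> n \<Longrightarrow> (A j has_real_derivative A (Suc j) x) (at x)"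
      and "\<And>j. j \<le> n \<Longrightarrow> (B j has_real_derivative B (Suc j) x) (at x)"
  shows "(leibniz_deriv A B n has_real_derivative leibniz_deriv A B (Suc n) x) (at x)"
  unfolding leibniz_deriv_Suc unfolding leibniz_deriv_def[abs_def]
proof (rule DERIV_sum)
  fix j assume "j \<in> {..n}"
  then have "(A j has_real_derivative A (Suc j) x) (at x)"
    and "(B (n - j) has_real_derivative B (Suc (n - j)) x) (at x)"
    using assms by auto
  from DERIV_cmult[OF DERIV_mult[OF this], of "real (n choose j)"]
  show "((\<lambda>y. real (n choose j) * A j y * B (n - j) y) has_real_derivative
      real (n choose j) * (A (Suc j) x * B (n - j) x + A j x * B (Suc (n - j)) x)) (at x)"
    by (simp add: algebra_simps)
qed

text \<open>The derivatives of \<open>exp (G 0)\<close> along a derivative tower \<open>G\<close>: apply the Leibniz rule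
  to \<open>(exp (G 0))' = G 1 * exp (G 0)\<close>.\<close>
fun exp_deriv :: "(nat \<Rightarrow> real \<Rightarrow> real) \<Rightarrow> nat \<Rightarrow> real \<Rightarrow> real" where
  "exp_deriv G 0 x = exp (G 0 x)"
| "exp_deriv G (Suc n) x = (\<Sum>j\<le>n. real (n choose j) * G (Suc j) x * exp_deriv G (n - j) x)"

lemma exp_deriv_Suc_eq_leibniz_deriv:
  "exp_deriv G (Suc n) = leibniz_deriv (\<lambda>j. G (Suc j)) (exp_deriv G) n"
  by (rule ext) (simp add: leibniz_deriv_def)

lemma DERIV_exp_deriv:
  assumes G: "\<And>k. (G k has_real_derivative G (Suc k) x) (at x)"
  shows "(exp_deriv G n has_real_derivative exp_deriv G (Suc n) x) (at x)"
proof (induction n rule: less_induct)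
  case (less n)
  show ?case
  proof (cases n)
    case 0
    have "((\<lambda>y. exp (G 0 y)) has_real_derivative exp (G 0 x) * G (Suc 0) x) (at x)"
      by (rule DERIV_fun_exp[OF G])
    then show ?thesis using 0 by (simp add: mult.commute fun_eq_iff)
  next
    case (Suc m)
    have "(leibniz_deriv (\<lambda>j. G (Suc j)) (exp_deriv G) m has_real_derivative
        leibniz_deriv (\<lambda>j. G (Suc j)) (exp_deriv G) (Suc m) x) (at x)"
      by (rule DERIV_leibniz_deriv) (use G less Suc in auto)
    then show ?thesis using Suc by (simp only: exp_deriv_Suc_eq_leibniz_deriv)
  qed
qed

lemma exp_deriv_alternating:
  assumes "\<And>k. (-1) ^ k * G (Suc k) x \<le> 0"
  shows "0 \<le> (-1) ^ n * exp_deriv G n x"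
proof (induction n rule: less_induct)
  case (less n)
  show ?case
  proof (cases n)
    case 0
    then show ?thesis by simp
  next
    case (Suc m)
    have "(-1) ^ n * exp_deriv G n x =
        (\<Sum>j\<le>m. real (m choose j) * - ((-1) ^ j * G (Suc j) x) * ((-1) ^ (m - j) * exp_deriv G (m - j) x))"
      unfolding Suc exp_deriv.simps(2) sum_distrib_left
    proof (rule sum.cong[OF refl])
      fix j assume "j \<in> {..m}"
      then have "(-1::real) ^ Suc m = - ((-1) ^ j * (-1) ^ (m - j))"
        by (simp flip: power_add)
      then show "(-1) ^ Suc m * (real (m choose j) * G (Suc j) x * exp_deriv G (m - j) x) =
          real (m choose j) * - ((-1) ^ j * G (Suc j) x) * ((-1) ^ (m - j) * exp_deriv G (m - j) x)"
        by (simp only: mult_ac mult_minus_left mult_minus_right)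
    qed
    also have "\<dots> \<ge> 0"
    proof (rule sum_nonneg)
      fix j assume "j \<in> {..m}"
      then have "0 \<le> (-1) ^ (m - j) * exp_deriv G (m - j) x" using less Suc by auto
      moreover have "0 \<le> - ((-1) ^ j * G (Suc j) x)" using assms[of j] by simp
      ultimately show "0 \<le> real (m choose j) * - ((-1) ^ j * G (Suc j) x) *
          ((-1) ^ (m - j) * exp_deriv G (m - j) x)"
        by (intro mult_nonneg_nonneg[OF mult_nonneg_nonneg]) simp_all
    qed
    finally show ?thesis .
  qed
qed

lemma completely_monotonic_on_exp:
  assumes "\<And>k x. x \<in> I \<Longrightarrow> (G k has_real_derivative G (Suc k) x) (at x)"
      and "\<And>k x. x \<in> I \<Longrightarrow> (-1) ^ k * G (Suc k) x \<le> 0"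
  shows "completely_monotonic_on (\<lambda>x. exp (G 0 x)) I"
  unfolding completely_monotonic_on_def
  by (rule exI[of _ "exp_deriv G"]) (use assms DERIV_exp_deriv exp_deriv_alternating in auto)

section \<open>Mixed power sums\<close>

definition mixed_power_sum :: "nat \<Rightarrow> 'a::comm_semiring_1 \<Rightarrow> 'a \<Rightarrow> 'a" where
  "mixed_power_sum m p q = (\<Sum>i<m. p ^ (m - i) * q ^ Suc i)"

lemma mixed_power_sum_eq:
  fixes p q :: "'a::comm_ring_1"
  shows "p * q * (q ^ m - p ^ m) = (q - p) * mixed_power_sum m p q"
proof -
  have "p * q * (\<Sum>i<m. p ^ (m - Suc i) * q ^ i) = mixed_power_sum m p q"
    unfolding mixed_power_sum_def sum_distrib_left
  proof (rule sum.cong[OF refl])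
    fix i assume "i \<in> {..<m}"
    then have "m - i = Suc (m - Suc i)" by auto
    then show "p * q * (p ^ (m - Suc i) * q ^ i) = p ^ (m - i) * q ^ Suc i"
      by (simp add: mult_ac)
  qed
  then show ?thesis by (simp add: power_diff_sumr2 mult_ac)
qed

lemma mixed_powers_le:
  fixes p q :: "'a::linordered_idom"
  assumes "0 \<le> p" "0 \<le> q"
  shows "p ^ j * q ^ k + p ^ k * q ^ j \<le> p ^ (j + k) + q ^ (j + k)"
proof -
  have "0 \<le> (p ^ j - q ^ j) * (p ^ k - q ^ k)"
  proof (cases "p \<le> q")
    case True
    then have "p ^ j \<le> q ^ j" "p ^ k \<le> q ^ k" using assms by (auto intro: power_mono)
    then show ?thesis by (simp add: mult_nonpos_nonpos)
  next
    case False
    then have "q ^ j \<le> p ^ j" "q ^ k \<le> p ^ k" using assms by (auto intro: power_mono)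
    then show ?thesis by simp
  qed
  then show ?thesis by (simp add: algebra_simps power_add)
qed

lemma mixed_power_sum_le:
  fixes p q :: "'a::linordered_idom"
  assumes "0 \<le> p" "0 \<le> q"
  shows "2 * mixed_power_sum m p q \<le> of_nat m * (p ^ Suc m + q ^ Suc m)"
proof -
  have reversed: "mixed_power_sum m p q = (\<Sum>i<m. p ^ Suc i * q ^ (m - i))"
    unfolding mixed_power_sum_def
  proof (subst sum.nat_diff_reindex[symmetric], rule sum.cong[OF refl])
    fix i assume "i \<in> {..<m}"
    then have "m - (m - Suc i) = Suc i" "Suc (m - Suc i) = m - i" by auto
    then show "p ^ (m - (m - Suc i)) * q ^ Suc (m - Suc i) = p ^ Suc i * q ^ (m - i)" by simp
  qed
  have "2 * mixed_power_sum m p q = (\<Sum>i<m. p ^ (m - i) * q ^ Suc i + p ^ Suc i * q ^ (m - i))"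
    by (subst mult_2, subst (2) reversed) (simp add: mixed_power_sum_def sum.distrib)
  also have "\<dots> \<le> (\<Sum>i<m. p ^ Suc m + q ^ Suc m)"
  proof (rule sum_mono)
    fix i assume "i \<in> {..<m}"
    then have "m - i + Suc i = Suc m" by auto
    then show "p ^ (m - i) * q ^ Suc i + p ^ Suc i * q ^ (m - i) \<le> p ^ Suc m + q ^ Suc m"
      using mixed_powers_le[OF assms, of "m - i" "Suc i"] by simp
  qed
  finally show ?thesis by simp
qed

lemma mixed_power_sum_ge:
  fixes p q :: "'a::linordered_idom"
  assumes "0 \<le> p" "0 \<le> q"
  shows "of_nat m * min p q ^ Suc m \<le> mixed_power_sum m p q"
proof -
  have "(\<Sum>i<m. min p q ^ (m - i) * min p q ^ Suc i) = (\<Sum>i<m. min p q ^ Suc m)"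
    by (rule sum.cong) (auto simp flip: power_add)
  then have "of_nat m * min p q ^ Suc m = (\<Sum>i<m. min p q ^ (m - i) * min p q ^ Suc i)"
    by simp
  also have "\<dots> \<le> mixed_power_sum m p q"
    unfolding mixed_power_sum_def
    by (intro sum_mono mult_mono power_mono) (use assms in auto)
  finally show ?thesis .
qed

section \<open>The logarithm of \<open>F\<^sub>\<alpha>\<^sub>,\<^sub>\<beta>\<close> and its derivatives\<close>

definition recip_deriv :: "nat \<Rightarrow> real \<Rightarrow> real \<Rightarrow> real" where
  "recip_deriv n c x = (-1) ^ n * fact n * inverse (x + c) ^ Suc n"

lemma DERIV_recip_deriv:
  assumes "x + c \<noteq> 0"
  shows "(recip_deriv n c has_real_derivative recip_deriv (Suc n) c x) (at x)"
proof -
  have "((\<lambda>y. inverse (y + c)) has_real_derivative - (inverse (x + c) ^ 2)) (at x)"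
    using assms by (auto intro!: derivative_eq_intros simp: power2_eq_square)
  then have deriv: "((\<lambda>y. (-1) ^ n * fact n * inverse (y + c) ^ Suc n) has_real_derivative
      (-1) ^ n * fact n * ((1 + real n) * (- (inverse (x + c) ^ 2) * inverse (x + c) ^ n))) (at x)"
    by (intro DERIV_cmult DERIV_power_Suc)
  have eq: "(-1) ^ n * fact n * ((1 + real n) * (- (w ^ 2) * w ^ n)) =
      (-1) ^ Suc n * fact (Suc n) * w ^ Suc (Suc n)" for w :: real
    by (simp add: fact_Suc power2_eq_square algebra_simps)
  from deriv show ?thesis unfolding eq recip_deriv_def[abs_def] .
qed

lemma recip_deriv_alternating:
  "(-1) ^ n * recip_deriv n c x = fact n / (x + c) ^ Suc n"
  "(-1) ^ n * recip_deriv (Suc n) c x = - (fact (Suc n) / (x + c) ^ Suc (Suc n))"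
  by (simp_all add: recip_deriv_def divide_inverse power_inverse flip: mult.assoc power_add)

definition ln_F :: "real \<Rightarrow> real \<Rightarrow> real \<Rightarrow> real" where
  "ln_F a b x = (x + b) * (ln (x + a) - ln x)"

fun ln_F_deriv :: "real \<Rightarrow> real \<Rightarrow> nat \<Rightarrow> real \<Rightarrow> real" where
  "ln_F_deriv a b 0 x = ln_F a b x"
| "ln_F_deriv a b (Suc 0) x =
     ln (x + a) - ln x - b * recip_deriv 0 0 x - (a - b) * recip_deriv 0 a x"
| "ln_F_deriv a b (Suc (Suc n)) x =
     recip_deriv n a x - recip_deriv n 0 x - b * recip_deriv (Suc n) 0 x - (a - b) * recip_deriv (Suc n) a x"

lemma ln_F_deriv_0: "ln_F_deriv a b 0 = ln_F a b"
  by (simp add: fun_eq_iff)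

lemma F_ab_eq_exp_ln_F:
  assumes "0 < x" "0 < x + a"
  shows "F_ab a b x = exp (ln_F a b x)"
proof -
  have "1 + a / x = (x + a) / x" using assms by (simp add: field_simps)
  then show ?thesis using assms by (simp add: F_ab_def ln_F_def powr_def ln_div)
qed

lemma DERIV_ln_F_deriv:
  assumes x: "0 < x" "0 < x + a"
  shows "(ln_F_deriv a b k has_real_derivative ln_F_deriv a b (Suc k) x) (at x)"
proof -
  consider "k = 0" | "k = Suc 0" | n where "k = Suc (Suc n)"
    by (metis not0_implies_Suc)
  then show ?thesis
  proof cases
    case 1
    have "((\<lambda>y. (y + b) * (ln (y + a) - ln y)) has_real_derivative
        ln (x + a) - ln x + (x + b) * (1 / (x + a) - 1 / x)) (at x)"
      using x by (auto intro!: derivative_eq_intros)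
    moreover have "ln (x + a) - ln x + (x + b) * (1 / (x + a) - 1 / x) =
        ln (x + a) - ln x - b * inverse x - (a - b) * inverse (x + a)"
      using x by (simp add: divide_simps) (simp add: algebra_simps)
    ultimately show ?thesis using 1 by (simp add: ln_F_deriv_0 ln_F_def[abs_def] recip_deriv_def)
  next
    case 2
    have "((\<lambda>y. ln (y + a) - ln y - b * recip_deriv 0 0 y - (a - b) * recip_deriv 0 a y)
        has_real_derivative recip_deriv 0 a x - recip_deriv 0 0 x
          - b * recip_deriv 1 0 x - (a - b) * recip_deriv 1 a x) (at x)"
      using x by (intro DERIV_diff DERIV_cmult DERIV_recip_deriv)
        (auto intro!: derivative_eq_intros simp: recip_deriv_def divide_inverse)
    moreover have "ln_F_deriv a b (Suc 0) =
        (\<lambda>y. ln (y + a) - ln y - b * recip_deriv 0 0 y - (a - b) * recip_deriv 0 a y)"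
      by (simp add: fun_eq_iff)
    ultimately show ?thesis using 2 by simp
  next
    case 3
    have "((\<lambda>y. recip_deriv n a y - recip_deriv n 0 y - b * recip_deriv (Suc n) 0 y
          - (a - b) * recip_deriv (Suc n) a y)
        has_real_derivative recip_deriv (Suc n) a x - recip_deriv (Suc n) 0 x
          - b * recip_deriv (Suc (Suc n)) 0 x - (a - b) * recip_deriv (Suc (Suc n)) a x) (at x)"
      using x by (intro DERIV_diff DERIV_cmult DERIV_recip_deriv) auto
    moreover have "ln_F_deriv a b (Suc (Suc n)) =
        (\<lambda>y. recip_deriv n a y - recip_deriv n 0 y - b * recip_deriv (Suc n) 0 y
          - (a - b) * recip_deriv (Suc n) a y)"
      by (simp add: fun_eq_iff)
    ultimately show ?thesis using 3 by simp
  qed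
qed

lemma ln_F_deriv_Suc_Suc_eq:
  fixes n :: nat
  assumes x: "0 < x" "0 < x + a"
  defines "m \<equiv> Suc n"
  defines "P \<equiv> x ^ Suc m" and "Q \<equiv> (x + a) ^ Suc m"
  shows "(-1) ^ n * ln_F_deriv a b (Suc (Suc n)) x =
    fact n * (real m * (b * (Q - P) + a * P) - a * mixed_power_sum m x (x + a)) / (P * Q)"
proof -
  have "(-1) ^ n * ln_F_deriv a b (Suc (Suc n)) x =
      (-1) ^ n * recip_deriv n a x - (-1) ^ n * recip_deriv n 0 x
      - b * ((-1) ^ n * recip_deriv (Suc n) 0 x) - (a - b) * ((-1) ^ n * recip_deriv (Suc n) a x)"
    by (simp add: algebra_simps)
  also have "\<dots> = fact n / (x + a) ^ m - fact n / x ^ m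
      + real m * fact n * (b / P + (a - b) / Q)"
    unfolding recip_deriv_alternating m_def P_def Q_def by (simp add: algebra_simps)
  also have "\<dots> = fact n * (real m * (b * (Q - P) + a * P) - x * (x + a) * ((x + a) ^ m - x ^ m)) / (P * Q)"
  proof -
    have "f / v - f / u + r * f * (b / (p * u) + (a - b) / (q * v))
        = f * (r * (b * (q * v - p * u) + a * (p * u)) - p * q * (v - u)) / ((p * u) * (q * v))"
      if "p \<noteq> 0" "q \<noteq> 0" "u \<noteq> 0" "v \<noteq> 0" for f r p q u v :: real
      using that by (simp add: field_simps)
    from this[of x "x + a" "x ^ m" "(x + a) ^ m" "fact n" "real m"]
    show ?thesis using x unfolding P_def Q_def by (simp add: mult.commute)
  qed
  also have "x * (x + a) * ((x + a) ^ m - x ^ m) = a * mixed_power_sum m x (x + a)"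
    by (simp add: mixed_power_sum_eq)
  finally show ?thesis .
qed

lemma ln_F_deriv_alternating_nonneg:
  assumes x: "0 < x" "0 < x + a" and ab: "(0 \<le> a \<and> a \<le> 2 * b) \<or> (a \<le> 0 \<and> b \<le> a)"
  shows "0 \<le> (-1) ^ n * ln_F_deriv a b (Suc (Suc n)) x"
proof -
  define m P Q S where "m = Suc n" and "P = x ^ Suc m" and "Q = (x + a) ^ Suc m"
    and "S = mixed_power_sum m x (x + a)"
  have "0 \<le> real m * (b * (Q - P) + a * P) - a * S"
  proof (cases "0 \<le> a \<and> a \<le> 2 * b")
    case True
    have "P \<le> Q" using True x unfolding P_def Q_def by (intro power_mono) auto
    moreover have "2 * S \<le> real m * (P + Q)"
      using mixed_power_sum_le[of x "x + a" m] x unfolding P_def Q_def S_def by simp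
    ultimately have "0 \<le> real m * ((b - a / 2) * (Q - P)) + a * (real m * (P + Q) - 2 * S) / 2"
      using True by (intro add_nonneg_nonneg mult_nonneg_nonneg divide_nonneg_pos) auto
    also have "\<dots> = real m * (b * (Q - P) + a * P) - a * S"
      by (simp add: field_simps)
    finally show ?thesis .
  next
    case False
    with ab have "a \<le> 0" "b \<le> a" by auto
    have "Q \<le> P" using \<open>a \<le> 0\<close> x unfolding P_def Q_def by (intro power_mono) auto
    moreover have "real m * Q \<le> S"
      using mixed_power_sum_ge[of x "x + a" m] x \<open>a \<le> 0\<close> unfolding Q_def S_def by simp
    ultimately have "0 \<le> real m * ((a - b) * (P - Q)) + (- a) * (S - real m * Q)"
      using \<open>a \<le> 0\<close> \<open>b \<le> a\<close> by (intro add_nonneg_nonneg mult_nonneg_nonneg) auto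
    also have "\<dots> = real m * (b * (Q - P) + a * P) - a * S"
      by (simp add: algebra_simps)
    finally show ?thesis .
  qed
  moreover have "(-1) ^ n * ln_F_deriv a b (Suc (Suc n)) x =
      fact n * (real m * (b * (Q - P) + a * P) - a * S) / (P * Q)"
    unfolding m_def P_def Q_def S_def by (rule ln_F_deriv_Suc_Suc_eq[OF x])
  moreover have "0 < P * Q" using x unfolding P_def Q_def by simp
  ultimately show ?thesis by simp
qed

lemma ln_F_deriv_alternating_nonpos:
  assumes x: "0 < x" "0 < x + a" and ab: "(0 \<le> a \<and> b \<le> 0) \<or> (a \<le> 0 \<and> a \<le> 2 * b)"
  shows "(-1) ^ n * ln_F_deriv a b (Suc (Suc n)) x \<le> 0"
proof -
  define m P Q S where "m = Suc n" and "P = x ^ Suc m" and "Q = (x + a) ^ Suc m"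
    and "S = mixed_power_sum m x (x + a)"
  have "real m * (b * (Q - P) + a * P) - a * S \<le> 0"
  proof (cases "0 \<le> a \<and> b \<le> 0")
    case True
    have "P \<le> Q" using True x unfolding P_def Q_def by (intro power_mono) auto
    moreover have "real m * P \<le> S"
      using mixed_power_sum_ge[of x "x + a" m] x True unfolding P_def S_def by simp
    ultimately have "0 \<le> real m * ((- b) * (Q - P)) + a * (S - real m * P)"
      using True by (intro add_nonneg_nonneg mult_nonneg_nonneg) auto
    also have "\<dots> = - (real m * (b * (Q - P) + a * P) - a * S)"
      by (simp add: algebra_simps)
    finally show ?thesis by simp
  next
    case False
    with ab have "a \<le> 0" "a \<le> 2 * b" by auto
    have "Q \<le> P" using \<open>a \<le> 0\<close> x unfolding P_def Q_def by (intro power_mono) auto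
    moreover have "2 * S \<le> real m * (P + Q)"
      using mixed_power_sum_le[of x "x + a" m] x unfolding P_def Q_def S_def by simp
    ultimately have "0 \<le> real m * ((b - a / 2) * (P - Q)) + (- a) * (real m * (P + Q) - 2 * S) / 2"
      using \<open>a \<le> 0\<close> \<open>a \<le> 2 * b\<close> by (intro add_nonneg_nonneg mult_nonneg_nonneg divide_nonneg_pos) auto
    also have "\<dots> = - (real m * (b * (Q - P) + a * P) - a * S)"
      by (simp add: field_simps)
    finally show ?thesis by simp
  qed
  moreover have "(-1) ^ n * ln_F_deriv a b (Suc (Suc n)) x =
      fact n * (real m * (b * (Q - P) + a * P) - a * S) / (P * Q)"
    unfolding m_def P_def Q_def S_def by (rule ln_F_deriv_Suc_Suc_eq[OF x])
  moreover have "0 < P * Q" using x unfolding P_def Q_def by simp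
  ultimately show ?thesis by (simp add: divide_nonpos_pos mult_nonneg_nonpos)
qed

lemma tendsto_ln_F: "(ln_F a b \<longlongrightarrow> a) at_top"
  unfolding ln_F_def by real_asymp

lemma tendsto_ln_F_deriv_1: "(ln_F_deriv a b (Suc 0) \<longlongrightarrow> 0) at_top"
proof -
  have "ln_F_deriv a b (Suc 0) = (\<lambda>x. ln (x + a) - ln x - b / x - (a - b) / (x + a))"
    by (simp add: fun_eq_iff recip_deriv_def divide_inverse)
  then show ?thesis by simp real_asymp
qed

lemma ln_F_asymptotics: "((\<lambda>x. x * (ln_F a b x - a)) \<longlongrightarrow> a * (2 * b - a) / 2) at_top"
proof -
  have "((\<lambda>x. x * (ln_F a b x - a)) \<longlongrightarrow> b * a - a * a / 2) at_top"
    unfolding ln_F_def by real_asymp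
  moreover have "b * a - a * a / 2 = a * (2 * b - a) / 2"
    by (simp add: algebra_simps)
  ultimately show ?thesis by simp
qed

lemma filterlim_ln_F_at_right_0:
  "0 < a \<Longrightarrow> 0 < b \<Longrightarrow> filterlim (ln_F a b) at_top (at_right 0)"
  unfolding ln_F_def by real_asymp

lemma filterlim_ln_F_at_right_neg:
  "a < 0 \<Longrightarrow> a < b \<Longrightarrow> filterlim (ln_F a b) at_bot (at_right (- a))"
  unfolding ln_F_def by real_asymp

lemma ln_F_deriv_1_nonpos:
  assumes ab: "(0 \<le> a \<and> a \<le> 2 * b) \<or> (a \<le> 0 \<and> b \<le> a)" and x: "max 0 (- a) < x"
  shows "ln_F_deriv a b (Suc 0) x \<le> 0"
proof (rule DERIV_nonneg_imp_le_tendsto_at_top[OF _ _ tendsto_ln_F_deriv_1 x])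
  fix y assume "max 0 (- a) < y"
  then have y: "0 < y" "0 < y + a" by auto
  show "(ln_F_deriv a b (Suc 0) has_real_derivative ln_F_deriv a b (Suc (Suc 0)) y) (at y)"
    by (rule DERIV_ln_F_deriv[OF y])
  show "0 \<le> ln_F_deriv a b (Suc (Suc 0)) y"
    using ln_F_deriv_alternating_nonneg[OF y ab, of 0] by simp
qed

lemma ln_F_ge:
  assumes ab: "(0 \<le> a \<and> a \<le> 2 * b) \<or> (a \<le> 0 \<and> b \<le> a)" and x: "max 0 (- a) < x"
  shows "a \<le> ln_F a b x"
proof (rule DERIV_nonpos_imp_ge_tendsto_at_top[OF _ _ tendsto_ln_F x])
  fix y assume y: "max 0 (- a) < y"
  then show "(ln_F a b has_real_derivative ln_F_deriv a b (Suc 0) y) (at y)"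
    using DERIV_ln_F_deriv[of y a b 0] by (simp add: ln_F_deriv_0)
  show "ln_F_deriv a b (Suc 0) y \<le> 0" by (rule ln_F_deriv_1_nonpos[OF ab y])
qed

lemma ln_F_deriv_1_nonneg:
  assumes ab: "(0 \<le> a \<and> b \<le> 0) \<or> (a \<le> 0 \<and> a \<le> 2 * b)" and x: "max 0 (- a) < x"
  shows "0 \<le> ln_F_deriv a b (Suc 0) x"
proof (rule DERIV_nonpos_imp_ge_tendsto_at_top[OF _ _ tendsto_ln_F_deriv_1 x])
  fix y assume "max 0 (- a) < y"
  then have y: "0 < y" "0 < y + a" by auto
  show "(ln_F_deriv a b (Suc 0) has_real_derivative ln_F_deriv a b (Suc (Suc 0)) y) (at y)"
    by (rule DERIV_ln_F_deriv[OF y])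
  show "ln_F_deriv a b (Suc (Suc 0)) y \<le> 0"
    using ln_F_deriv_alternating_nonpos[OF y ab, of 0] by simp
qed

lemma ln_F_le:
  assumes ab: "(0 \<le> a \<and> b \<le> 0) \<or> (a \<le> 0 \<and> a \<le> 2 * b)" and x: "max 0 (- a) < x"
  shows "ln_F a b x \<le> a"
proof (rule DERIV_nonneg_imp_le_tendsto_at_top[OF _ _ tendsto_ln_F x])
  fix y assume y: "max 0 (- a) < y"
  then show "(ln_F a b has_real_derivative ln_F_deriv a b (Suc 0) y) (at y)"
    using DERIV_ln_F_deriv[of y a b 0] by (simp add: ln_F_deriv_0)
  show "0 \<le> ln_F_deriv a b (Suc 0) y" by (rule ln_F_deriv_1_nonneg[OF ab y])
qed

lemma completely_monotonic_on_exp_ln_F: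
  assumes ab: "(0 \<le> a \<and> a \<le> 2 * b) \<or> (a \<le> 0 \<and> b \<le> a)"
  shows "completely_monotonic_on (\<lambda>x. exp (ln_F a b x)) {max 0 (- a)<..}"
proof -
  have "completely_monotonic_on (\<lambda>x. exp (ln_F_deriv a b 0 x)) {max 0 (- a)<..}"
  proof (rule completely_monotonic_on_exp)
    fix k x assume "x \<in> {max 0 (- a)<..}"
    then have x: "max 0 (- a) < x" "0 < x" "0 < x + a" by auto
    show "(ln_F_deriv a b k has_real_derivative ln_F_deriv a b (Suc k) x) (at x)"
      by (rule DERIV_ln_F_deriv[OF x(2,3)])
    show "(-1) ^ k * ln_F_deriv a b (Suc k) x \<le> 0"
    proof (cases k)
      case 0
      then show ?thesis using ln_F_deriv_1_nonpos[OF ab x(1)] by simp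
    next
      case (Suc n)
      then show ?thesis using ln_F_deriv_alternating_nonneg[OF x(2,3) ab, of n] by simp
    qed
  qed
  then show ?thesis by simp
qed

lemma completely_monotonic_on_exp_neg_ln_F:
  assumes ab: "(0 \<le> a \<and> b \<le> 0) \<or> (a \<le> 0 \<and> a \<le> 2 * b)"
  shows "completely_monotonic_on (\<lambda>x. exp (- ln_F a b x)) {max 0 (- a)<..}"
proof -
  have "completely_monotonic_on (\<lambda>x. exp ((\<lambda>k x. - ln_F_deriv a b k x) 0 x)) {max 0 (- a)<..}"
  proof (rule completely_monotonic_on_exp)
    fix k x assume "x \<in> {max 0 (- a)<..}"
    then have x: "max 0 (- a) < x" "0 < x" "0 < x + a" by auto
    show "((\<lambda>x. - ln_F_deriv a b k x) has_real_derivative - ln_F_deriv a b (Suc k) x) (at x)"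
      by (rule DERIV_minus[OF DERIV_ln_F_deriv[OF x(2,3)]])
    show "(-1) ^ k * - ln_F_deriv a b (Suc k) x \<le> 0"
    proof (cases k)
      case 0
      then show ?thesis using ln_F_deriv_1_nonneg[OF ab x(1)] by simp
    next
      case (Suc n)
      then show ?thesis
        using ln_F_deriv_alternating_nonpos[OF x(2,3) ab, of n] by (simp del: ln_F_deriv.simps)
    qed
  qed
  then show ?thesis by simp
qed

lemma ln_F_ge_imp_product_nonneg:
  assumes "\<And>x. c < x \<Longrightarrow> a \<le> ln_F a b x"
  shows "0 \<le> a * (2 * b - a)"
proof -
  have "\<forall>\<^sub>F x in at_top. 0 \<le> x * (ln_F a b x - a)"
    using eventually_gt_at_top[of "max 0 c"] by eventually_elim (use assms in auto)
  then have "0 \<le> a * (2 * b - a) / 2" by (rule tendsto_lowerbound[OF ln_F_asymptotics]) simp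
  then show ?thesis by simp
qed

lemma ln_F_le_imp_product_nonpos:
  assumes "\<And>x. c < x \<Longrightarrow> ln_F a b x \<le> a"
  shows "a * (2 * b - a) \<le> 0"
proof -
  have "\<forall>\<^sub>F x in at_top. x * (ln_F a b x - a) \<le> 0"
    using eventually_gt_at_top[of "max 0 c"] by eventually_elim (use assms in \<open>auto simp: mult_nonneg_nonpos\<close>)
  then have "a * (2 * b - a) / 2 \<le> 0" by (rule tendsto_upperbound[OF ln_F_asymptotics]) simp
  then show ?thesis by simp
qed

lemma ln_F_le_imp_nonpos:
  assumes "0 < a" and le: "\<And>x. 0 < x \<Longrightarrow> ln_F a b x \<le> a"
  shows "b \<le> 0"
proof (rule ccontr)
  assume "\<not> b \<le> 0"
  then have "filterlim (ln_F a b) at_top (at_right 0)"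
    using filterlim_ln_F_at_right_0 \<open>0 < a\<close> by simp
  then have "\<forall>\<^sub>F x in at_right 0. a < ln_F a b x"
    unfolding filterlim_at_top_dense by blast
  moreover have "\<forall>\<^sub>F x in at_right 0. (0::real) < x" by (rule eventually_at_right_less)
  ultimately have "\<forall>\<^sub>F x in at_right (0::real). False"
    by eventually_elim (use le in force)
  then show False by simp
qed

lemma ln_F_ge_imp_le:
  assumes "a < 0" and ge: "\<And>x. - a < x \<Longrightarrow> a \<le> ln_F a b x"
  shows "b \<le> a"
proof (rule ccontr)
  assume "\<not> b \<le> a"
  then have "filterlim (ln_F a b) at_bot (at_right (- a))"
    using filterlim_ln_F_at_right_neg \<open>a < 0\<close> by simp
  then have "\<forall>\<^sub>F x in at_right (- a). ln_F a b x < a"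
    unfolding filterlim_at_bot_dense by blast
  moreover have "\<forall>\<^sub>F x in at_right (- a). - a < x" by (rule eventually_at_right_less)
  ultimately have "\<forall>\<^sub>F x in at_right (- a). False"
    by eventually_elim (use ge in force)
  then show False by simp
qed

section \<open>The four characterisations\<close>

lemma completely_monotonic_on_F_minus_exp_iff_pos:
  assumes "0 < a"
  shows "completely_monotonic_on (\<lambda>x. (1 + a / x) powr (x + b) - exp a) {0<..} \<longleftrightarrow> a \<le> 2 * b"
proof -
  have dom: "{0<..} = {max 0 (- a)<..}" using assms by simp
  have "completely_monotonic_on (\<lambda>x. (1 + a / x) powr (x + b) - exp a) {0<..} \<longleftrightarrow>
      completely_monotonic_on (\<lambda>x. exp (ln_F a b x) - exp a) {max 0 (- a)<..}"
    unfolding dom by (rule completely_monotonic_on_cong) (simp add: F_ab_eq_exp_ln_F flip: F_ab_def)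
  also have "\<dots> \<longleftrightarrow> a \<le> 2 * b"
  proof
    assume "a \<le> 2 * b"
    with assms show "completely_monotonic_on (\<lambda>x. exp (ln_F a b x) - exp a) {max 0 (- a)<..}"
      by (intro completely_monotonic_on_diff_const completely_monotonic_on_exp_ln_F) (auto intro: ln_F_ge)
  next
    assume "completely_monotonic_on (\<lambda>x. exp (ln_F a b x) - exp a) {max 0 (- a)<..}"
    then have "a \<le> ln_F a b x" if "max 0 (- a) < x" for x
      using completely_monotonic_on_nonneg that by fastforce
    then have "0 \<le> a * (2 * b - a)" by (rule ln_F_ge_imp_product_nonneg)
    with assms show "a \<le> 2 * b" by (simp add: zero_le_mult_iff)
  qed
  finally show ?thesis .
qed

lemma completely_monotonic_on_F_inverse_minus_exp_iff_pos:
  assumes "0 < a"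
  shows "completely_monotonic_on (\<lambda>x. (1 + a / x) powr (- (x + b)) - exp (- a)) {0<..} \<longleftrightarrow> b \<le> 0"
proof -
  have dom: "{0<..} = {max 0 (- a)<..}" using assms by simp
  have "completely_monotonic_on (\<lambda>x. (1 + a / x) powr (- (x + b)) - exp (- a)) {0<..} \<longleftrightarrow>
      completely_monotonic_on (\<lambda>x. exp (- ln_F a b x) - exp (- a)) {max 0 (- a)<..}"
    unfolding dom by (rule completely_monotonic_on_cong)
      (simp only: powr_minus F_ab_def[symmetric], simp add: F_ab_eq_exp_ln_F exp_minus)
  also have "\<dots> \<longleftrightarrow> b \<le> 0"
  proof
    assume "b \<le> 0"
    with assms show "completely_monotonic_on (\<lambda>x. exp (- ln_F a b x) - exp (- a)) {max 0 (- a)<..}"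
      by (intro completely_monotonic_on_diff_const completely_monotonic_on_exp_neg_ln_F) (auto intro: ln_F_le)
  next
    assume "completely_monotonic_on (\<lambda>x. exp (- ln_F a b x) - exp (- a)) {max 0 (- a)<..}"
    then have "ln_F a b x \<le> a" if "0 < x" for x
      using completely_monotonic_on_nonneg assms that by fastforce
    with assms show "b \<le> 0" by (rule ln_F_le_imp_nonpos)
  qed
  finally show ?thesis .
qed

lemma completely_monotonic_on_F_minus_exp_iff_neg:
  assumes "a < 0"
  shows "completely_monotonic_on (\<lambda>x. (1 + a / x) powr (x + b) - exp a) {- a<..} \<longleftrightarrow> b \<le> a"
proof -
  have dom: "{- a<..} = {max 0 (- a)<..}" using assms by simp
  have "completely_monotonic_on (\<lambda>x. (1 + a / x) powr (x + b) - exp a) {- a<..} \<longleftrightarrow>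
      completely_monotonic_on (\<lambda>x. exp (ln_F a b x) - exp a) {max 0 (- a)<..}"
    unfolding dom by (rule completely_monotonic_on_cong) (simp add: F_ab_eq_exp_ln_F flip: F_ab_def)
  also have "\<dots> \<longleftrightarrow> b \<le> a"
  proof
    assume "b \<le> a"
    with assms show "completely_monotonic_on (\<lambda>x. exp (ln_F a b x) - exp a) {max 0 (- a)<..}"
      by (intro completely_monotonic_on_diff_const completely_monotonic_on_exp_ln_F) (auto intro: ln_F_ge)
  next
    assume "completely_monotonic_on (\<lambda>x. exp (ln_F a b x) - exp a) {max 0 (- a)<..}"
    then have "a \<le> ln_F a b x" if "- a < x" for x
      using completely_monotonic_on_nonneg assms that by fastforce
    with assms show "b \<le> a" by (rule ln_F_ge_imp_le)
  qed
  finally show ?thesis .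
qed

lemma completely_monotonic_on_inverse_F_iff_neg:
  assumes "a < 0"
  shows "completely_monotonic_on (\<lambda>x. 1 / F_ab a b x) {- a<..} \<longleftrightarrow> a \<le> 2 * b"
proof -
  have dom: "{- a<..} = {max 0 (- a)<..}" using assms by simp
  have "completely_monotonic_on (\<lambda>x. 1 / F_ab a b x) {- a<..} \<longleftrightarrow>
      completely_monotonic_on (\<lambda>x. exp (- ln_F a b x)) {max 0 (- a)<..}"
    unfolding dom by (rule completely_monotonic_on_cong) (simp add: F_ab_eq_exp_ln_F exp_minus divide_inverse)
  also have "\<dots> \<longleftrightarrow> a \<le> 2 * b"
  proof
    assume "a \<le> 2 * b"
    with assms show "completely_monotonic_on (\<lambda>x. exp (- ln_F a b x)) {max 0 (- a)<..}"
      by (intro completely_monotonic_on_exp_neg_ln_F) auto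
  next
    assume cm: "completely_monotonic_on (\<lambda>x. exp (- ln_F a b x)) {max 0 (- a)<..}"
    have "((\<lambda>x. exp (- ln_F a b x)) \<longlongrightarrow> exp (- a)) at_top"
      by (intro tendsto_intros tendsto_ln_F)
    with cm have "ln_F a b x \<le> a" if "max 0 (- a) < x" for x
      using completely_monotonic_on_ge_tendsto that by fastforce
    then have "a * (2 * b - a) \<le> 0" by (rule ln_F_le_imp_product_nonpos)
    with assms show "a \<le> 2 * b" by (simp add: mult_le_0_iff)
  qed
  finally show ?thesis .
qed

theorem theorem1p3:
  fixes \<alpha> \<beta> :: real
  shows "(\<alpha> > 0 \<longrightarrow>
           ((completely_monotonic_on (\<lambda>x. (1 + \<alpha> / x) powr (x + \<beta>) - exp \<alpha>) {0<..}
               \<longleftrightarrow> \<alpha> \<le> 2 * \<beta>) \<and>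
            (completely_monotonic_on (\<lambda>x. (1 + \<alpha> / x) powr (-(x + \<beta>)) - exp (-\<alpha>)) {0<..}
               \<longleftrightarrow> \<beta> \<le> 0))) \<and>
         (\<alpha> < 0 \<longrightarrow>
           ((completely_monotonic_on (\<lambda>x. (1 + \<alpha> / x) powr (x + \<beta>) - exp \<alpha>) {-\<alpha><..}
               \<longleftrightarrow> \<beta> \<le> \<alpha>) \<and>
            (completely_monotonic_on (\<lambda>x. 1 / F_ab \<alpha> \<beta> x) {-\<alpha><..}
               \<longleftrightarrow> 2 * \<beta> \<ge> \<alpha>)))"
  using completely_monotonic_on_F_minus_exp_iff_pos completely_monotonic_on_F_inverse_minus_exp_iff_pos
    completely_monotonic_on_F_minus_exp_iff_neg completely_monotonic_on_inverse_F_iff_neg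
  by blast

end
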